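(* Let $D$ be an integral domain and let $S$ be a splitting multiplicative subset of $D$ generated by prime elements. Then $D$ is a completely atomic domain (resp., a RIDF-domain, a U-FFD) if and only if $D_S$ is a completely atomic domain (resp., a RIDF-domain, a U-FFD).
   Context: A multiplicative subset $S$ of $D$ is generated by primes if $S=\{u p_1\cdots p_n: u\in U(D),\ p_i\in P,\ n\ge0\}$ for some set $P$ of prime elements of $D$. A saturated multiplicative subset $S$ of $D$ is splitting if each $x\in D$ can be written as $x=as$ with $a\in D$, $s\in S$, such that $aD\cap tD=atD$ for all $t\in S$. An atom (irreducible element) is a nonzero nonunit $a$ such that $a=bc$ implies $b$ or $c$ is a unit; a nonzero nonunit is atomic if it is a finite product of atoms. A domain is completely atomic if every nonunit divisor of an atomic element is atomic. A domain is a RIDF-domain if every atomic element has only finitely many pairwise nonassociate irreducible divisors. A domain is a U-FFD if every atomic element has only finitely many factorizations into irreducibles (up to order and associates). *)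

theory Defs
  imports "HOL-Computational_Algebra.Fraction_Field"
    "HOL-Library.Multiset"
begin

section \<open>Multiplicative subsets of an integral domain D (D = UNIV of type 'a::idom)\<close>

definition saturated_mult_subset :: "'a::idom set \<Rightarrow> bool" where
  "saturated_mult_subset S \<longleftrightarrow> 1 \<in> S \<and> 0 \<notin> S \<and>
     (\<forall>a b. a * b \<in> S \<longleftrightarrow> a \<in> S \<and> b \<in> S)"

text \<open>Prime element of D (the same as the library's prime_elem, which requires a
  stronger type class than idom).\<close>
definition prime_element :: "'a::idom \<Rightarrow> bool" where
  "prime_element p \<longleftrightarrow> p \<noteq> 0 \<and> \<not> p dvd 1 \<and> (\<forall>a b. p dvd (a * b) \<longrightarrow> p dvd a \<or> p dvd b)"

definition generated_by_primes :: "'a::idom set \<Rightarrow> bool" where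
  "generated_by_primes S \<longleftrightarrow> (\<exists>P. (\<forall>p\<in>P. prime_element p) \<and>
     S = {u * prod_list ps | u ps. u dvd 1 \<and> set ps \<subseteq> P})"

definition principal_ideal :: "'a::idom \<Rightarrow> 'a set" where
  "principal_ideal x = {x * d | d. True}"

definition splitting_set :: "'a::idom set \<Rightarrow> bool" where
  "splitting_set S \<longleftrightarrow> saturated_mult_subset S \<and>
     (\<forall>x. \<exists>a s. s \<in> S \<and> x = a * s \<and>
        (\<forall>t\<in>S. principal_ideal a \<inter> principal_ideal t = principal_ideal (a * t)))"

text \<open>The localization D_S, realised as a subring of the quotient field of D.\<close>
definition localization :: "'a::idom set \<Rightarrow> 'a fract set" where
  "localization S = {Fract a s | a s. s \<in> S}"

definition unit_in :: "'b::comm_ring_1 set \<Rightarrow> 'b \<Rightarrow> bool" where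
  "unit_in R u \<longleftrightarrow> u \<in> R \<and> (\<exists>v\<in>R. u * v = 1)"

definition dvd_in :: "'b::comm_ring_1 set \<Rightarrow> 'b \<Rightarrow> 'b \<Rightarrow> bool" where
  "dvd_in R a b \<longleftrightarrow> a \<in> R \<and> b \<in> R \<and> (\<exists>c\<in>R. b = a * c)"

definition assoc_in :: "'b::comm_ring_1 set \<Rightarrow> 'b \<Rightarrow> 'b \<Rightarrow> bool" where
  "assoc_in R a b \<longleftrightarrow> dvd_in R a b \<and> dvd_in R b a"

definition atom_in :: "'b::comm_ring_1 set \<Rightarrow> 'b \<Rightarrow> bool" where
  "atom_in R a \<longleftrightarrow> a \<in> R \<and> a \<noteq> 0 \<and> \<not> unit_in R a \<and>
     (\<forall>b\<in>R. \<forall>c\<in>R. a = b * c \<longrightarrow> unit_in R b \<or> unit_in R c)"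

definition atomic_in :: "'b::comm_ring_1 set \<Rightarrow> 'b \<Rightarrow> bool" where
  "atomic_in R x \<longleftrightarrow> x \<in> R \<and> x \<noteq> 0 \<and> \<not> unit_in R x \<and>
     (\<exists>as. as \<noteq> [] \<and> (\<forall>a\<in>set as. atom_in R a) \<and> x = prod_list as)"

definition completely_atomic :: "'b::comm_ring_1 set \<Rightarrow> bool" where
  "completely_atomic R \<longleftrightarrow> (\<forall>x y. atomic_in R x \<and> dvd_in R y x \<and> \<not> unit_in R y
      \<longrightarrow> atomic_in R y)"

text \<open>RIDF: every atomic element has only finitely many pairwise nonassociate
  irreducible divisors, i.e. its irreducible divisors fall into finitely many
  associate classes.\<close>
definition RIDF :: "'b::comm_ring_1 set \<Rightarrow> bool" where
  "RIDF R \<longleftrightarrow> (\<forall>x. atomic_in R x \<longrightarrow>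
     finite {{b. assoc_in R a b} | a. atom_in R a \<and> dvd_in R a x})"

definition factorizations_in :: "'b::comm_ring_1 set \<Rightarrow> 'b \<Rightarrow> 'b list set" where
  "factorizations_in R x = {as. as \<noteq> [] \<and> (\<forall>a\<in>set as. atom_in R a) \<and> x = prod_list as}"

definition fact_equiv :: "'b::comm_ring_1 set \<Rightarrow> 'b list \<Rightarrow> 'b list \<Rightarrow> bool" where
  "fact_equiv R as bs \<longleftrightarrow> (\<exists>as'. mset as' = mset as \<and> list_all2 (assoc_in R) as' bs)"

definition UFFD :: "'b::comm_ring_1 set \<Rightarrow> bool" where
  "UFFD R \<longleftrightarrow> (\<forall>x. atomic_in R x \<longrightarrow>
     (\<exists>F. finite F \<and> F \<subseteq> factorizations_in R x \<and>
        (\<forall>as\<in>factorizations_in R x. \<exists>bs\<in>F. fact_equiv R as bs)))"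

end

theory Submission
  imports Defs "HOL-Computational_Algebra.Polynomial_Factorial"
begin

text \<open>
  Every nonzero x in D factors as x = a s with s in S and a prime to S (no nonunit of S divides
  a), uniquely up to units; this is where the splitting property enters. As S is generated by
  primes, s is a product of primes, the atoms of D are the primes dividing elements of S together
  with the atoms prime to S, and a factorization of x is a factorization of a (up to a unit)
  followed by the essentially unique prime factorization of s. On the other side, every nonzero
  element of D_S is associated to some a/1 with a prime to S, and a \<mapsto> a/1 reflects divisibility
  between elements prime to S. Hence it matches the atoms, associate classes and factorizations of
  a in D with those of a/1 in D_S, and each of the three properties transfers in both directions
  between D and D_S.
\<close>

lemma prod_list_remove1:
  fixes qs :: "'a::comm_monoid_mult list"
  shows "q \<in> set qs \<Longrightarrow> prod_list qs = q * prod_list (remove1 q qs)"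
  by (induction qs) (auto simp: mult_ac)

lemma prod_list_filter_split:
  fixes xs :: "'a::comm_monoid_mult list"
  shows "prod_list xs = prod_list (filter Q xs) * prod_list (filter (\<lambda>x. \<not> Q x) xs)"
  by (induction xs) (simp_all add: mult_ac)

lemma to_fract_prod_list: "to_fract (prod_list xs) = prod_list (map to_fract xs)"
  by (induction xs) simp_all

lemma unit_mult_dvd_iff:
  fixes u :: "'a::comm_semiring_1"
  assumes "u dvd 1"
  shows "u * b dvd c \<longleftrightarrow> b dvd c"
proof
  assume "b dvd c"
  obtain v where "1 = u * v"
    using assms by (rule dvdE)
  then have "u * b dvd b"
    by (metis dvdI mult.commute mult.left_commute mult_1)
  then show "u * b dvd c"
    using \<open>b dvd c\<close> by (rule dvd_trans)
qed (rule dvd_mult_right)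

lemma dvd_antisym_unit_factor:
  fixes a b :: "'a::idom"
  assumes "a dvd b" "b dvd a" "a \<noteq> 0"
  obtains k where "k dvd 1" "b = a * k"
proof -
  obtain c where c: "b = a * c"
    using assms(1) by (rule dvdE)
  obtain d where d: "a = b * d"
    using assms(2) by (rule dvdE)
  have "a * (c * d) = a * 1"
    using c d by (metis mult.assoc mult_1_right)
  then have "c * d = 1"
    using assms(3) mult_left_cancel by blast
  then have "c dvd 1"
    by (metis dvd_triv_left)
  then show ?thesis
    using that c by blast
qed

lemma prime_elementD:
  assumes "prime_element p"
  shows "p \<noteq> 0" "\<not> p dvd 1" "p dvd a * b \<Longrightarrow> p dvd a \<or> p dvd b"
  using assms unfolding prime_element_def by blast+

lemma prime_element_mult_unit:
  fixes p :: "'a::idom"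
  assumes p: "prime_element p" and w: "w dvd 1"
  shows "prime_element (p * w)"
proof -
  have dvd_iff: "p * w dvd x \<longleftrightarrow> p dvd x" for x
    using unit_mult_dvd_iff[OF w, of p x] by (simp add: mult.commute)
  have "w \<noteq> 0"
    using w by auto
  then show ?thesis
    using p unfolding prime_element_def dvd_iff by simp
qed

lemma prime_element_dvd_prod_list:
  assumes "prime_element p" "p dvd prod_list xs"
  shows "\<exists>x\<in>set xs. p dvd x"
  using assms(2) by (induction xs) (use assms(1) in \<open>auto simp: prime_element_def\<close>)

section \<open>Factorization relative to a multiplicatively closed set\<close>

definition mult_closed :: "'b::comm_ring_1 set \<Rightarrow> bool" where
  "mult_closed R \<longleftrightarrow> 1 \<in> R \<and> (\<forall>x\<in>R. \<forall>y\<in>R. x * y \<in> R)"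

lemma mult_closedD: "mult_closed R \<Longrightarrow> x \<in> R \<Longrightarrow> y \<in> R \<Longrightarrow> x * y \<in> R"
  by (simp add: mult_closed_def)

lemma mult_closed_UNIV [simp]: "mult_closed UNIV"
  by (simp add: mult_closed_def)

lemma in_UNIV_simps [simp]:
  "unit_in UNIV u \<longleftrightarrow> u dvd 1"
  "dvd_in UNIV a b \<longleftrightarrow> a dvd b"
  "assoc_in UNIV a b \<longleftrightarrow> a dvd b \<and> b dvd a"
  unfolding unit_in_def dvd_in_def assoc_in_def by (auto simp: dvd_def)

lemma atom_in_UNIV_iff:
  "atom_in UNIV a \<longleftrightarrow> a \<noteq> 0 \<and> \<not> a dvd 1 \<and> (\<forall>b c. a = b * c \<longrightarrow> b dvd 1 \<or> c dvd 1)"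
  by (auto simp: atom_in_def)

lemma unit_in_mem: "unit_in R u \<Longrightarrow> u \<in> R"
  by (simp add: unit_in_def)

lemma unit_in_inverseE:
  assumes "unit_in R u"
  obtains v where "unit_in R v" "u * v = 1"
  using assms unfolding unit_in_def by (metis mult.commute)

lemma assoc_in_mem: "assoc_in R a b \<Longrightarrow> a \<in> R \<and> b \<in> R"
  by (simp add: assoc_in_def dvd_in_def)

lemma assoc_in_sym: "assoc_in R a b \<Longrightarrow> assoc_in R b a"
  unfolding assoc_in_def by blast

lemma factorizations_in_subset: "as \<in> factorizations_in R x \<Longrightarrow> set as \<subseteq> R"
  by (auto simp: factorizations_in_def atom_in_def)

definition assoc_class :: "'b::comm_ring_1 set \<Rightarrow> 'b \<Rightarrow> 'b set" where
  "assoc_class R a = {b. assoc_in R a b}"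

definition factorization_type :: "'b::comm_ring_1 set \<Rightarrow> 'b list \<Rightarrow> 'b set multiset" where
  "factorization_type R as = mset (map (assoc_class R) as)"

lemma factorization_type_Nil [simp]: "factorization_type R [] = {#}"
  and factorization_type_Cons [simp]:
    "factorization_type R (a # as) = add_mset (assoc_class R a) (factorization_type R as)"
  by (simp_all add: factorization_type_def)

lemma factorization_type_filter_split:
  "factorization_type R xs = factorization_type R (filter Q xs) + factorization_type R (filter (\<lambda>x. \<not> Q x) xs)"
  by (induction xs) simp_all

lemma factorization_type_remove1:
  "q \<in> set qs \<Longrightarrow> factorization_type R qs = add_mset (assoc_class R q) (factorization_type R (remove1 q qs))"
  unfolding factorization_type_def
  by (metis image_mset_add_mset insert_DiffM mset_map mset_remove1 set_mset_mset)

definition factorization_types :: "'b::comm_ring_1 set \<Rightarrow> 'b \<Rightarrow> 'b set multiset set" where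
  "factorization_types R x = factorization_type R ` factorizations_in R x"

definition atom_divisor_classes :: "'b::comm_ring_1 set \<Rightarrow> 'b \<Rightarrow> 'b set set" where
  "atom_divisor_classes R x = {assoc_class R a | a. atom_in R a \<and> dvd_in R a x}"

lemma RIDF_iff_finite_atom_divisor_classes:
  "RIDF R \<longleftrightarrow> (\<forall>x. atomic_in R x \<longrightarrow> finite (atom_divisor_classes R x))"
  by (simp add: RIDF_def atom_divisor_classes_def assoc_class_def)

context
  fixes R :: "'b::idom set"
  assumes R: "mult_closed R"
begin

lemma unit_in_one: "unit_in R 1"
  using R by (simp add: unit_in_def mult_closed_def)

lemma unit_in_mult: "unit_in R u \<Longrightarrow> unit_in R v \<Longrightarrow> unit_in R (u * v)"
  unfolding unit_in_def using mult_closedD[OF R] by (metis mult.left_commute mult_1_right)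

lemma prod_list_in: "set xs \<subseteq> R \<Longrightarrow> prod_list xs \<in> R"
  by (induction xs) (use R in \<open>auto simp: mult_closed_def\<close>)

lemma dvd_in_trans: "dvd_in R a b \<Longrightarrow> dvd_in R b c \<Longrightarrow> dvd_in R a c"
  unfolding dvd_in_def using mult_closedD[OF R] by (metis mult.assoc)

lemma assoc_in_refl: "a \<in> R \<Longrightarrow> assoc_in R a a"
  using R unfolding assoc_in_def dvd_in_def mult_closed_def by (metis mult_1_right)

lemma assoc_in_trans: "assoc_in R a b \<Longrightarrow> assoc_in R b c \<Longrightarrow> assoc_in R a c"
  unfolding assoc_in_def using dvd_in_trans by blast

lemma assoc_in_mult_unit: "a \<in> R \<Longrightarrow> unit_in R u \<Longrightarrow> assoc_in R a (a * u)"
  unfolding assoc_in_def dvd_in_def unit_in_def using mult_closedD[OF R]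
  by (metis mult.assoc mult_1_right)

lemma assoc_class_eq_iff:
  "a \<in> R \<Longrightarrow> b \<in> R \<Longrightarrow> assoc_class R a = assoc_class R b \<longleftrightarrow> assoc_in R a b"
  unfolding assoc_class_def using assoc_in_refl assoc_in_sym assoc_in_trans by blast

lemma assoc_class_mult_unit: "a \<in> R \<Longrightarrow> unit_in R u \<Longrightarrow> assoc_class R (a * u) = assoc_class R a"
  using assoc_class_eq_iff assoc_in_mult_unit assoc_in_mem assoc_in_sym by metis

lemma dvd_in_mult_unit_iff:
  assumes u: "unit_in R u"
  shows "dvd_in R a (x * u) \<longleftrightarrow> dvd_in R a x"
proof -
  obtain v where v: "unit_in R v" "u * v = 1"
    using u by (rule unit_in_inverseE)
  have "x = x * u * v"
    using v(2) by (simp add: mult.assoc)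
  then show ?thesis
    using u v(1) unfolding dvd_in_def unit_in_def
    by (metis mult_closedD[OF R] mult.assoc)
qed

lemma atom_in_mult_unit:
  assumes a: "atom_in R a" and u: "unit_in R u"
  shows "atom_in R (a * u)"
proof -
  obtain v where v: "unit_in R v" "u * v = 1"
    using u by (rule unit_in_inverseE)
  have "\<not> unit_in R (a * u)"
    using unit_in_mult[OF _ v(1), of "a * u"] a v(2) by (auto simp: atom_in_def mult.assoc)
  moreover have "unit_in R b \<or> unit_in R c" if "b \<in> R" "c \<in> R" "a * u = b * c" for b c
  proof -
    have "a = b * (c * v)" and "c * v \<in> R"
      using that v mult_closedD[OF R] unit_in_mem by (metis mult.assoc mult_1_right)+
    then have "unit_in R b \<or> unit_in R (c * v)"
      using a that(1) by (auto simp: atom_in_def)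
    moreover have "c = c * v * u"
      using v(2) by (simp add: mult.assoc mult.commute)
    ultimately show ?thesis
      using unit_in_mult[OF _ u, of "c * v"] by metis
  qed
  ultimately show ?thesis
    using a u mult_closedD[OF R] unit_in_mem by (auto simp: atom_in_def unit_in_def)
qed

lemma atom_in_mult_unit_iff:
  assumes u: "unit_in R u"
  shows "atom_in R (a * u) \<longleftrightarrow> atom_in R a"
proof
  obtain v where v: "unit_in R v" "u * v = 1"
    using u by (rule unit_in_inverseE)
  assume "atom_in R (a * u)"
  then have "atom_in R (a * u * v)"
    using v(1) by (rule atom_in_mult_unit)
  then show "atom_in R a"
    using v(2) by (simp add: mult.assoc)
qed (use u atom_in_mult_unit in blast)

lemma atomic_in_iff_factorizations: "atomic_in R x \<longleftrightarrow> factorizations_in R x \<noteq> {}"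
proof
  assume "factorizations_in R x \<noteq> {}"
  then obtain a as where x: "x = a * prod_list as" and atoms: "\<forall>b\<in>set (a # as). atom_in R b"
    unfolding factorizations_in_def by (auto simp: neq_Nil_conv)
  have in_R: "a \<in> R" "prod_list as \<in> R"
    using atoms prod_list_in by (auto simp: atom_in_def)
  have "\<not> unit_in R x"
  proof
    assume "unit_in R x"
    then obtain v where "v \<in> R" "a * (prod_list as * v) = 1"
      unfolding unit_in_def x by (auto simp: mult.assoc)
    then have "unit_in R a"
      using in_R mult_closedD[OF R] unfolding unit_in_def by blast
    then show False
      using atoms by (simp add: atom_in_def)
  qed
  then show "atomic_in R x"
    using \<open>factorizations_in R x \<noteq> {}\<close> in_R atoms mult_closedD[OF R]
    unfolding atomic_in_def factorizations_in_def x
    by (auto simp: atom_in_def prod_list_zero_iff)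
qed (auto simp: atomic_in_def factorizations_in_def)

lemma atomic_in_iff_factorization_types: "atomic_in R x \<longleftrightarrow> factorization_types R x \<noteq> {}"
  by (simp add: atomic_in_iff_factorizations factorization_types_def)

lemma factorization_types_mult_unit:
  assumes u: "unit_in R u"
  shows "factorization_types R (x * u) = factorization_types R x"
proof -
  have types_mono: "factorization_types R y \<subseteq> factorization_types R (y * w)" if w: "unit_in R w" for y w
  proof
    fix M assume "M \<in> factorization_types R y"
    then obtain a as where fac: "a # as \<in> factorizations_in R y" and M: "M = factorization_type R (a # as)"
      unfolding factorization_types_def factorizations_in_def by (auto simp: neq_Nil_conv)
    then have a: "atom_in R a"
      by (simp add: factorizations_in_def)
    have "(a * w) # as \<in> factorizations_in R (y * w)"
      using fac atom_in_mult_unit[OF a w] by (auto simp: factorizations_in_def mult_ac)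
    moreover have "factorization_type R ((a * w) # as) = M"
      using M assoc_class_mult_unit[OF _ w] a by (simp add: factorization_type_def atom_in_def)
    ultimately show "M \<in> factorization_types R (y * w)"
      unfolding factorization_types_def by (metis imageI)
  qed
  obtain v where v: "unit_in R v" "u * v = 1"
    using u by (rule unit_in_inverseE)
  have "factorization_types R (x * u) \<subseteq> factorization_types R (x * u * v)"
    using types_mono[OF v(1)] .
  also have "x * u * v = x"
    using v(2) by (simp add: mult.assoc)
  finally show ?thesis
    using types_mono[OF u] by blast
qed

lemma atomic_in_mult_unit: "unit_in R u \<Longrightarrow> atomic_in R (x * u) \<longleftrightarrow> atomic_in R x"
  by (simp add: atomic_in_iff_factorization_types factorization_types_mult_unit)

lemma atomic_in_mult:
  assumes "atomic_in R x" "atomic_in R y"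
  shows "atomic_in R (x * y)"
proof -
  obtain as bs where "as \<in> factorizations_in R x" "bs \<in> factorizations_in R y"
    using assms atomic_in_iff_factorizations by blast
  then have "as @ bs \<in> factorizations_in R (x * y)"
    by (auto simp: factorizations_in_def)
  then show ?thesis
    using atomic_in_iff_factorizations by blast
qed

lemma atomic_in_mult_unit_or_atomic:
  assumes "unit_in R a \<or> atomic_in R a" "unit_in R b \<or> atomic_in R b" "\<not> unit_in R (a * b)"
  shows "atomic_in R (a * b)"
  using assms atomic_in_mult atomic_in_mult_unit unit_in_mult by (metis mult.commute)

lemma atom_divisor_classes_mult_unit:
  "unit_in R u \<Longrightarrow> atom_divisor_classes R (x * u) = atom_divisor_classes R x"
  by (simp add: atom_divisor_classes_def dvd_in_mult_unit_iff)

lemma factorization_type_eq_if_assoc: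
  "list_all2 (assoc_in R) as bs \<Longrightarrow> factorization_type R as = factorization_type R bs"
proof (induction rule: list_all2_induct)
  case (Cons a as b bs)
  then have "assoc_class R a = assoc_class R b"
    using assoc_class_eq_iff assoc_in_mem by blast
  then show ?case
    using Cons.IH by simp
qed simp

lemma fact_equiv_iff_factorization_type_eq:
  assumes "set as \<subseteq> R" "set bs \<subseteq> R"
  shows "fact_equiv R as bs \<longleftrightarrow> factorization_type R as = factorization_type R bs"
proof
  assume "fact_equiv R as bs"
  then obtain as' where "mset as' = mset as" "list_all2 (assoc_in R) as' bs"
    unfolding fact_equiv_def by blast
  then show "factorization_type R as = factorization_type R bs"
    using factorization_type_eq_if_assoc by (metis factorization_type_def mset_map)
next
  assume "factorization_type R as = factorization_type R bs"
  then have "mset (map (assoc_class R) bs) = mset (map (assoc_class R) as)"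
    by (simp add: factorization_type_def)
  moreover have "list_all2 (\<lambda>C a. C = assoc_class R a) (map (assoc_class R) as) as"
    by (simp add: list_all2_map1 list_all2_refl)
  ultimately obtain as' where as': "list_all2 (\<lambda>C a. C = assoc_class R a) (map (assoc_class R) bs) as'"
    "mset as' = mset as"
    using list_all2_reorder_left_invariance by blast
  have "set as' \<subseteq> R"
    using as'(2) assms(1) by (metis mset_eq_setD)
  have "assoc_in R (as' ! i) (bs ! i)" if "i < length as'" "i < length bs" for i
  proof -
    have "as' ! i \<in> R" "bs ! i \<in> R"
      using that \<open>set as' \<subseteq> R\<close> assms(2) nth_mem by blast+
    moreover have "assoc_class R (bs ! i) = assoc_class R (as' ! i)"
      using as'(1) that by (simp add: list_all2_map1 list_all2_conv_all_nth)
    ultimately show ?thesis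
      using assoc_class_eq_iff by blast
  qed
  then have "list_all2 (assoc_in R) as' bs"
    using as'(1) by (auto simp: list_all2_map1 list_all2_conv_all_nth)
  then show "fact_equiv R as bs"
    using as'(2) unfolding fact_equiv_def by blast
qed

lemma UFFD_iff_finite_factorization_types:
  "UFFD R \<longleftrightarrow> (\<forall>x. atomic_in R x \<longrightarrow> finite (factorization_types R x))"
proof -
  have equiv_iff: "fact_equiv R as bs \<longleftrightarrow> factorization_type R as = factorization_type R bs"
    if "as \<in> factorizations_in R x" "bs \<in> factorizations_in R x" for as bs x
    using that fact_equiv_iff_factorization_type_eq factorizations_in_subset by blast
  have "(\<exists>F. finite F \<and> F \<subseteq> factorizations_in R x \<and>
          (\<forall>as\<in>factorizations_in R x. \<exists>bs\<in>F. fact_equiv R as bs))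
        \<longleftrightarrow> finite (factorization_types R x)" for x
  proof
    assume "\<exists>F. finite F \<and> F \<subseteq> factorizations_in R x \<and>
          (\<forall>as\<in>factorizations_in R x. \<exists>bs\<in>F. fact_equiv R as bs)"
    then obtain F where "finite F" "F \<subseteq> factorizations_in R x"
      "\<forall>as\<in>factorizations_in R x. \<exists>bs\<in>F. fact_equiv R as bs"
      by blast
    then have "factorization_types R x \<subseteq> factorization_type R ` F"
      unfolding factorization_types_def using equiv_iff by blast
    then show "finite (factorization_types R x)"
      using \<open>finite F\<close> finite_surj by blast
  next
    assume fin: "finite (factorization_types R x)"
    define F where "F = inv_into (factorizations_in R x) (factorization_type R) ` factorization_types R x"
    have "finite F"
      using fin unfolding F_def by simp
    moreover have "F \<subseteq> factorizations_in R x"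
      unfolding F_def factorization_types_def by (auto intro: inv_into_into)
    moreover have "\<exists>bs\<in>F. fact_equiv R as bs" if as: "as \<in> factorizations_in R x" for as
    proof -
      let ?bs = "inv_into (factorizations_in R x) (factorization_type R) (factorization_type R as)"
      have "?bs \<in> factorizations_in R x" "factorization_type R ?bs = factorization_type R as"
        using as by (auto intro: inv_into_into f_inv_into_f)
      moreover have "?bs \<in> F"
        using as unfolding F_def factorization_types_def by blast
      ultimately show ?thesis
        using as equiv_iff by metis
    qed
    ultimately show "\<exists>F. finite F \<and> F \<subseteq> factorizations_in R x \<and>
          (\<forall>as\<in>factorizations_in R x. \<exists>bs\<in>F. fact_equiv R as bs)"
      by blast
  qed
  then show ?thesis
    unfolding UFFD_def by blast
qed

end

lemma prime_element_imp_atom: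
  fixes p :: "'a::idom"
  assumes p: "prime_element p"
  shows "atom_in UNIV p"
proof -
  have cofactor_unit: "c dvd 1" if eq: "p = b * c" and dvd: "p dvd b" for b c
  proof -
    obtain e where "b = p * e"
      using dvd by (rule dvdE)
    then have "p * (e * c) = p * 1"
      using eq by (metis mult.assoc mult.commute mult_1_right)
    then have "e * c = 1"
      using p mult_left_cancel unfolding prime_element_def by blast
    then show ?thesis
      by (metis dvd_triv_right)
  qed
  have "b dvd 1 \<or> c dvd 1" if "p = b * c" for b c
  proof -
    have "p dvd b * c"
      using that by simp
    then have "p dvd b \<or> p dvd c"
      using p unfolding prime_element_def by blast
    then show ?thesis
      using cofactor_unit[of b c] cofactor_unit[of c b] that by (auto simp: mult.commute)
  qed
  then show ?thesis
    using p by (simp add: atom_in_UNIV_iff prime_element_def)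
qed

lemma atom_dvd_imp_dvd:
  fixes p q :: "'a::idom"
  assumes "atom_in UNIV q" "\<not> p dvd 1" "p dvd q"
  shows "q dvd p"
proof -
  obtain d where "q = p * d"
    using assms(3) by (rule dvdE)
  then have "d dvd 1"
    using assms(1,2) by (auto simp: atom_in_UNIV_iff)
  then show ?thesis
    using \<open>q = p * d\<close> unit_mult_dvd_iff by (metis dvd_refl mult.commute)
qed

lemma factorization_type_primes_unique:
  fixes ps :: "'a::idom list"
  assumes "\<forall>p\<in>set ps. prime_element p" "\<forall>q\<in>set qs. prime_element q"
    and "v dvd 1" "prod_list ps * v = prod_list qs"
  shows "factorization_type UNIV ps = factorization_type UNIV qs"
  using assms
proof (induction ps arbitrary: qs v)
  case Nil
  have "qs = []"
  proof (rule ccontr)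
    assume "qs \<noteq> []"
    then obtain q where q: "q \<in> set qs"
      by fastforce
    have "q dvd v"
      using Nil(4) prod_list_remove1[OF q] by (metis dvd_triv_left mult_1 prod_list.Nil)
    then have "q dvd 1"
      using Nil(3) by (rule dvd_trans)
    then show False
      using Nil(2) q by (simp add: prime_element_def)
  qed
  then show ?case
    by simp
next
  case (Cons p ps)
  have p: "prime_element p" and p0: "p \<noteq> 0" and "\<not> p dvd 1"
    using Cons.prems(1) by (simp_all add: prime_element_def)
  have qs_eq: "prod_list qs = p * (prod_list ps * v)"
    using Cons.prems(4) by (simp add: mult.assoc)
  then obtain q where q: "q \<in> set qs" "p dvd q"
    using p prime_element_dvd_prod_list by (metis dvd_triv_left)
  have "q dvd p"
    using atom_dvd_imp_dvd prime_element_imp_atom Cons.prems(2) q \<open>\<not> p dvd 1\<close> by blast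
  obtain k where k: "k dvd 1" "q = p * k"
    using dvd_antisym_unit_factor[OF q(2) \<open>q dvd p\<close> p0] by blast
  obtain k' where k': "1 = k * k'"
    using k(1) by (rule dvdE)
  have "p * (prod_list ps * v) = p * (k * prod_list (remove1 q qs))"
    using qs_eq prod_list_remove1[OF q(1)] k(2) by (metis mult.assoc)
  then have "prod_list ps * v = k * prod_list (remove1 q qs)"
    using p0 mult_left_cancel by blast
  then have rest_eq: "prod_list ps * (v * k') = prod_list (remove1 q qs)"
    using k' by (metis mult.assoc mult.commute mult_1_right)
  have unit: "v * k' dvd 1"
  proof -
    have "k' dvd 1"
      using k' by (metis dvd_triv_right)
    then show ?thesis
      using mult_dvd_mono[OF Cons.prems(3)] by fastforce
  qed
  have rest_primes: "\<forall>q\<in>set (remove1 q qs). prime_element q"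
    using Cons.prems(2) by (meson notin_set_remove1)
  have ps_primes: "\<forall>p\<in>set ps. prime_element p"
    using Cons.prems(1) by simp
  have "factorization_type UNIV ps = factorization_type UNIV (remove1 q qs)"
    by (rule Cons.IH[OF ps_primes rest_primes unit rest_eq])
  moreover have "assoc_class UNIV p = assoc_class UNIV q"
    using assoc_class_eq_iff[OF mult_closed_UNIV UNIV_I UNIV_I, of p q] q(2) \<open>q dvd p\<close> by simp
  ultimately show ?case
    using factorization_type_remove1[OF q(1)] by simp
qed

lemma prime_element_dvd_unit_prod_list:
  fixes c :: "'a::idom"
  assumes c: "prime_element c" and qs: "\<forall>q\<in>set qs. prime_element q"
    and dvd: "c dvd u * prod_list qs" and u: "u dvd 1"
  obtains q where "q \<in> set qs" "assoc_class UNIV c = assoc_class UNIV q"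
proof -
  have "\<not> c dvd u"
    using c u dvd_trans prime_elementD(2) by blast
  then have "c dvd prod_list qs"
    using prime_elementD(3)[OF c dvd] by blast
  then obtain q where q: "q \<in> set qs" "c dvd q"
    using c prime_element_dvd_prod_list by blast
  then have "q dvd c"
    using atom_dvd_imp_dvd prime_element_imp_atom qs prime_elementD(2)[OF c] by blast
  then have "assoc_class UNIV c = assoc_class UNIV q"
    using assoc_class_eq_iff[OF mult_closed_UNIV UNIV_I UNIV_I, of c q] q(2) by simp
  then show ?thesis
    using that q(1) by blast
qed

section \<open>Splitting sets generated by primes\<close>

locale prime_splitting_set =
  fixes S :: "'a::idom set" and P :: "'a set"
  assumes splitting: "splitting_set S"
    and prime_generators: "p \<in> P \<Longrightarrow> prime_element p"
    and S_generated: "S = {u * prod_list ps | u ps. u dvd 1 \<and> set ps \<subseteq> P}"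
begin

lemma one_in_S: "1 \<in> S" and zero_notin_S: "0 \<notin> S" and mult_in_S_iff: "a * b \<in> S \<longleftrightarrow> a \<in> S \<and> b \<in> S"
  using splitting unfolding splitting_set_def saturated_mult_subset_def by blast+

lemma unit_in_S: "u dvd 1 \<Longrightarrow> u \<in> S"
  using one_in_S mult_in_S_iff by (metis dvdE)

lemma generator_in_S: "p \<in> P \<Longrightarrow> p \<in> S"
  unfolding S_generated by (intro CollectI exI[of _ 1] exI[of _ "[p]"]) simp

lemma in_S_E:
  assumes "t \<in> S"
  obtains u ps where "u dvd 1" "set ps \<subseteq> P" "t = u * prod_list ps"
  using assms S_generated by blast

lemma prod_list_in_S: "set xs \<subseteq> S \<Longrightarrow> prod_list xs \<in> S"
  by (induction xs) (auto simp: one_in_S mult_in_S_iff)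

text \<open>
  For S generated by primes, S_coprime a holds iff a \<noteq> 0 and aD \<inter> sD = asD for all s in S,
  the condition in the definition of a splitting set.
\<close>

definition S_coprime :: "'a \<Rightarrow> bool" where
  "S_coprime a \<longleftrightarrow> a \<noteq> 0 \<and> (\<forall>t\<in>S. t dvd a \<longrightarrow> t dvd 1)"

lemma S_coprime_nonzero: "S_coprime a \<Longrightarrow> a \<noteq> 0"
  by (simp add: S_coprime_def)

lemma S_coprime_dvd: "S_coprime a \<Longrightarrow> b dvd a \<Longrightarrow> S_coprime b"
  unfolding S_coprime_def by (meson dvd_0_left dvd_trans)

lemma S_coprime_one: "S_coprime 1"
  by (simp add: S_coprime_def)

lemma S_coprime_in_S_iff: "S_coprime a \<Longrightarrow> a \<in> S \<longleftrightarrow> a dvd 1"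
  unfolding S_coprime_def using unit_in_S by auto

lemma prod_generators_dvd_mult_S_coprime:
  assumes "set ps \<subseteq> P" and a: "S_coprime a" and "prod_list ps dvd a * c"
  shows "prod_list ps dvd c"
  using assms(1,3)
proof (induction ps arbitrary: c)
  case (Cons p ps)
  have p: "prime_element p" and "p \<in> S" and p0: "p \<noteq> 0"
    using Cons.prems(1) prime_generators generator_in_S by (auto simp: prime_element_def)
  have "p dvd a * c"
    using Cons.prems(2) dvd_mult_left[of p "prod_list ps"] by simp
  moreover have "\<not> p dvd a"
    using a p \<open>p \<in> S\<close> unfolding S_coprime_def prime_element_def by blast
  ultimately have "p dvd c"
    using prime_elementD(3)[OF p] by blast
  then obtain d where c: "c = p * d"
    by (rule dvdE)
  have "p * prod_list ps dvd p * (a * d)"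
    using Cons.prems(2) c by (simp add: mult.left_commute)
  then have "prod_list ps dvd a * d"
    using p0 by simp
  moreover have "set ps \<subseteq> P"
    using Cons.prems(1) by simp
  ultimately have "prod_list ps dvd d"
    using Cons.IH[of d] by blast
  then have "p * prod_list ps dvd p * d"
    by (rule mult_dvd_mono[OF dvd_refl])
  then show ?case
    by (simp only: c prod_list.Cons)
qed simp

lemma S_dvd_mult_S_coprime:
  assumes t: "t \<in> S" and a: "S_coprime a" and dvd: "t dvd a * c"
  shows "t dvd c"
proof -
  obtain u ps where u: "u dvd 1" and ps: "set ps \<subseteq> P" and t_eq: "t = u * prod_list ps"
    using t by (rule in_S_E)
  show ?thesis
    using prod_generators_dvd_mult_S_coprime[OF ps a] dvd
    unfolding t_eq unit_mult_dvd_iff[OF u] .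
qed

lemma S_coprime_mult:
  assumes a: "S_coprime a" and b: "S_coprime b"
  shows "S_coprime (a * b)"
proof -
  have "t dvd 1" if "t \<in> S" "t dvd a * b" for t
    using S_dvd_mult_S_coprime[OF that(1) a that(2)] b that(1) unfolding S_coprime_def by blast
  then show ?thesis
    using a b unfolding S_coprime_def by simp
qed

lemma S_coprime_prod_list: "\<forall>x\<in>set xs. S_coprime x \<Longrightarrow> S_coprime (prod_list xs)"
  by (induction xs) (simp_all add: S_coprime_one S_coprime_mult)

lemma S_coprime_decomposition:
  assumes "x \<noteq> 0"
  obtains a s where "S_coprime a" "s \<in> S" "x = a * s"
proof -
  obtain a s where as: "s \<in> S" "x = a * s"
    and split: "\<forall>t\<in>S. principal_ideal a \<inter> principal_ideal t = principal_ideal (a * t)"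
    using splitting unfolding splitting_set_def by blast
  have a0: "a \<noteq> 0"
    using as assms by auto
  have "t dvd 1" if t: "t \<in> S" "t dvd a" for t
  proof -
    have "a \<in> principal_ideal a \<inter> principal_ideal t"
      using t(2) unfolding principal_ideal_def dvd_def by (auto intro!: exI[of _ 1])
    then obtain d where "a = a * t * d"
      using split t(1) unfolding principal_ideal_def by blast
    then have "a * (t * d) = a * 1"
      by (metis mult.assoc mult_1_right)
    then have "t * d = 1"
      using a0 mult_left_cancel by blast
    then show ?thesis
      by (metis dvd_triv_left)
  qed
  then show ?thesis
    using that as a0 unfolding S_coprime_def by blast
qed

lemma S_coprime_decomposition_unique:
  assumes a: "S_coprime a" and a': "S_coprime a'" and s: "s \<in> S" and s': "s' \<in> S"
    and eq: "a * s = a' * s'"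
  obtains w where "w dvd 1" "a = a' * w" "s' = s * w"
proof -
  have "s dvd s'"
    using S_dvd_mult_S_coprime[OF s a'] eq by (metis dvd_triv_right)
  moreover have "s' dvd s"
    using S_dvd_mult_S_coprime[OF s' a] eq by (metis dvd_triv_right)
  moreover have "s \<noteq> 0"
    using s zero_notin_S by blast
  ultimately obtain w where w: "w dvd 1" "s' = s * w"
    by (rule dvd_antisym_unit_factor)
  then have "s * a = s * (a' * w)"
    using eq by (metis mult.commute mult.left_commute)
  then have "a = a' * w"
    using \<open>s \<noteq> 0\<close> mult_left_cancel by blast
  then show ?thesis
    using that w by blast
qed

lemma S_coprime_dvd_mult_S:
  assumes c: "S_coprime c" and a: "S_coprime a" and s: "s \<in> S" and dvd: "c dvd a * s"
  shows "c dvd a"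
proof -
  obtain k where k: "a * s = c * k"
    using dvd by (rule dvdE)
  have "a * s \<noteq> 0"
    using S_coprime_nonzero[OF a] s zero_notin_S by auto
  then have "k \<noteq> 0"
    using k by auto
  then obtain k' s' where k': "S_coprime k'" "s' \<in> S" "k = k' * s'"
    by (rule S_coprime_decomposition)
  have "a * s = (c * k') * s'"
    using k k'(3) by (simp add: mult.assoc)
  then obtain w where "a = (c * k') * w"
    using S_coprime_decomposition_unique[OF a S_coprime_mult[OF c k'(1)] s k'(2)] by blast
  then show ?thesis
    by (metis dvd_triv_left mult.assoc)
qed

lemma atom_S_coprime_or_in_S:
  assumes c: "atom_in UNIV c"
  shows "S_coprime c \<or> c \<in> S"
proof -
  have "c \<noteq> 0"
    using c by (simp add: atom_in_UNIV_iff)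
  then obtain a s where as: "S_coprime a" "s \<in> S" "c = a * s"
    by (rule S_coprime_decomposition)
  then have "a dvd 1 \<or> s dvd 1"
    using c atom_in_UNIV_iff by blast
  then show ?thesis
  proof
    assume "a dvd 1"
    then show ?thesis
      using as unit_in_S mult_in_S_iff by blast
  next
    assume "s dvd 1"
    then have "c dvd a"
      using unit_mult_dvd_iff[of s a a] as(3) by (simp add: mult.commute)
    then show ?thesis
      using S_coprime_dvd as(1) by blast
  qed
qed

lemma atom_in_S_imp_prime:
  assumes c: "atom_in UNIV c" and "c \<in> S"
  shows "prime_element c"
proof -
  obtain u ps where u: "u dvd 1" and ps: "set ps \<subseteq> P" and c_eq: "c = u * prod_list ps"
    using \<open>c \<in> S\<close> by (rule in_S_E)
  have "ps \<noteq> []"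
    using c u c_eq by (auto simp: atom_in_UNIV_iff)
  then obtain p rest where ps_eq: "ps = p # rest"
    by (cases ps) auto
  have p: "prime_element p"
    using ps ps_eq prime_generators by simp
  have c_eq': "c = p * (u * prod_list rest)"
    using c_eq ps_eq by (simp add: mult_ac)
  moreover have "\<not> p dvd 1"
    using p by (simp add: prime_element_def)
  ultimately have "u * prod_list rest dvd 1"
    using c atom_in_UNIV_iff by blast
  then show ?thesis
    using prime_element_mult_unit[OF p] c_eq' by simp
qed

lemma S_nonunit_atomic:
  assumes t: "t \<in> S" and nonunit: "\<not> t dvd 1"
  shows "atomic_in UNIV t"
proof -
  obtain u ps where u: "u dvd 1" and ps: "set ps \<subseteq> P" and t_eq: "t = u * prod_list ps"
    using t by (rule in_S_E)
  have "ps \<noteq> []"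
    using nonunit u t_eq by auto
  moreover have "\<forall>p\<in>set ps. atom_in UNIV p"
    using ps prime_generators prime_element_imp_atom by blast
  ultimately have "ps \<in> factorizations_in UNIV (prod_list ps)"
    unfolding factorizations_in_def by blast
  then have "atomic_in UNIV (prod_list ps)"
    using atomic_in_iff_factorizations[OF mult_closed_UNIV] by blast
  then have "atomic_in UNIV (prod_list ps * u)"
    using atomic_in_mult_unit[OF mult_closed_UNIV, of u] u by simp
  then show ?thesis
    using t_eq by (simp add: mult.commute)
qed

lemma atom_factorization_split:
  assumes atoms: "\<forall>c\<in>set cs. atom_in UNIV c" and eq: "prod_list cs = a * s"
    and a: "S_coprime a" and s: "s \<in> S"
  obtains w where "w dvd 1" "a = prod_list (filter S_coprime cs) * w"
    "prod_list (filter (\<lambda>c. \<not> S_coprime c) cs) = s * w"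
proof -
  have coprime_part: "S_coprime (prod_list (filter S_coprime cs))"
    by (rule S_coprime_prod_list) simp
  have S_part: "prod_list (filter (\<lambda>c. \<not> S_coprime c) cs) \<in> S"
    using atoms atom_S_coprime_or_in_S by (intro prod_list_in_S) auto
  have "a * s = prod_list (filter S_coprime cs) * prod_list (filter (\<lambda>c. \<not> S_coprime c) cs)"
    using eq prod_list_filter_split[of cs S_coprime] by simp
  then obtain w where "w dvd 1" "a = prod_list (filter S_coprime cs) * w"
    "prod_list (filter (\<lambda>c. \<not> S_coprime c) cs) = s * w"
    by (rule S_coprime_decomposition_unique[OF a coprime_part s S_part])
  then show ?thesis
    by (rule that)
qed

lemma atomic_S_coprime_factor:
  assumes x: "atomic_in UNIV (a * s)" and a: "S_coprime a" and s: "s \<in> S"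
  shows "a dvd 1 \<or> atomic_in UNIV a"
proof -
  obtain cs where cs: "cs \<noteq> []" "\<forall>c\<in>set cs. atom_in UNIV c" "prod_list cs = a * s"
    using x unfolding atomic_in_def by auto
  then obtain w where w: "w dvd 1" "a = prod_list (filter S_coprime cs) * w"
    using a s by (blast elim: atom_factorization_split)
  show ?thesis
  proof (cases "filter S_coprime cs = []")
    case True
    then show ?thesis
      using w by simp
  next
    case False
    then have "filter S_coprime cs \<in> factorizations_in UNIV (prod_list (filter S_coprime cs))"
      using cs(2) unfolding factorizations_in_def by auto
    then have "atomic_in UNIV (prod_list (filter S_coprime cs))"
      using atomic_in_iff_factorizations[OF mult_closed_UNIV] by blast
    then show ?thesis
      using w atomic_in_mult_unit[OF mult_closed_UNIV, of w] by simp
  qed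
qed

subsection \<open>The localization D_S\<close>

abbreviation DS :: "'a fract set" where
  "DS \<equiv> localization S"

lemma Fract_in_DS: "s \<in> S \<Longrightarrow> Fraction_Field.Fract x s \<in> DS"
  unfolding localization_def by blast

lemma to_fract_in_DS: "to_fract x \<in> DS"
  using Fract_in_DS[OF one_in_S] by (simp add: to_fract_def)

lemma DS_elementE:
  assumes "X \<in> DS"
  obtains x s where "s \<in> S" "X = Fraction_Field.Fract x s"
  using assms unfolding localization_def by blast

lemma mult_closed_DS: "mult_closed DS"
proof -
  have "X * Y \<in> DS" if XY: "X \<in> DS" "Y \<in> DS" for X Y
  proof -
    obtain x s where s: "s \<in> S" and X: "X = Fraction_Field.Fract x s"
      using XY(1) by (rule DS_elementE)
    obtain y t where t: "t \<in> S" and Y: "Y = Fraction_Field.Fract y t"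
      using XY(2) by (rule DS_elementE)
    have "X * Y = Fraction_Field.Fract (x * y) (s * t)"
      using X Y by simp
    moreover have "s * t \<in> S"
      using s t mult_in_S_iff by blast
    ultimately show ?thesis
      using Fract_in_DS by simp
  qed
  moreover have "(1 :: 'a fract) \<in> DS"
    using to_fract_in_DS[of 1] by simp
  ultimately show ?thesis
    unfolding mult_closed_def by blast
qed

lemma unit_in_DS_Fract_iff:
  assumes s: "s \<in> S"
  shows "unit_in DS (Fraction_Field.Fract x s) \<longleftrightarrow> x \<in> S"
proof
  assume x: "x \<in> S"
  have "s * x \<noteq> 0"
    using x s zero_notin_S mult_in_S_iff by metis
  then have "Fraction_Field.Fract x s * Fraction_Field.Fract s x = 1"
    by (simp add: One_fract_def eq_fract mult.commute)
  then show "unit_in DS (Fraction_Field.Fract x s)"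
    unfolding unit_in_def using Fract_in_DS s x by blast
next
  assume "unit_in DS (Fraction_Field.Fract x s)"
  then obtain Y where Y_in: "Y \<in> DS" and inv: "Fraction_Field.Fract x s * Y = 1"
    unfolding unit_in_def by blast
  obtain y t where t: "t \<in> S" and Y: "Y = Fraction_Field.Fract y t"
    using Y_in by (rule DS_elementE)
  have st: "s * t \<in> S"
    using s t mult_in_S_iff by blast
  then have "s * t \<noteq> 0"
    using zero_notin_S by auto
  moreover have "Fraction_Field.Fract (x * y) (s * t) = Fraction_Field.Fract 1 1"
    using inv Y by (simp add: One_fract_def)
  ultimately have "x * y = s * t"
    by (simp add: eq_fract)
  then have "x * y \<in> S"
    using st by simp
  then show "x \<in> S"
    using mult_in_S_iff by blast
qed

lemma unit_in_DS_to_fract_iff: "unit_in DS (to_fract x) \<longleftrightarrow> x \<in> S"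
  using unit_in_DS_Fract_iff[OF one_in_S] by (simp add: to_fract_def)

lemma unit_in_DS_to_fract_S_coprime_iff: "S_coprime b \<Longrightarrow> unit_in DS (to_fract b) \<longleftrightarrow> b dvd 1"
  by (simp add: unit_in_DS_to_fract_iff S_coprime_in_S_iff)

lemma DS_nonzero_decomposition:
  assumes "X \<in> DS" "X \<noteq> 0"
  obtains b W where "S_coprime b" "unit_in DS W" "X = to_fract b * W"
proof -
  obtain x s where s: "s \<in> S" and X: "X = Fraction_Field.Fract x s"
    using assms(1) by (rule DS_elementE)
  have "x \<noteq> 0"
    using assms(2) X by (auto simp: fract_collapse)
  then obtain b s' where b: "S_coprime b" and s': "s' \<in> S" and x: "x = b * s'"
    by (rule S_coprime_decomposition)
  have "X = to_fract b * Fraction_Field.Fract s' s"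
    using X x by (simp add: to_fract_def)
  moreover have "unit_in DS (Fraction_Field.Fract s' s)"
    using unit_in_DS_Fract_iff s s' by blast
  ultimately show ?thesis
    using that b by blast
qed

lemma to_fract_dvd_in_DS: "b dvd c \<Longrightarrow> dvd_in DS (to_fract b) (to_fract c)"
  unfolding dvd_in_def using to_fract_in_DS by (auto elim!: dvdE)

lemma to_fract_dvd_in_DS_iff:
  assumes b: "S_coprime b"
  shows "dvd_in DS (to_fract b) (to_fract c) \<longleftrightarrow> b dvd c"
proof
  assume "dvd_in DS (to_fract b) (to_fract c)"
  then obtain Y where Y_in: "Y \<in> DS" and c_eq: "to_fract c = to_fract b * Y"
    unfolding dvd_in_def by blast
  obtain y t where t: "t \<in> S" and Y: "Y = Fraction_Field.Fract y t"
    using Y_in by (rule DS_elementE)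
  have "t \<noteq> 0"
    using t zero_notin_S by blast
  moreover have "Fraction_Field.Fract c 1 = Fraction_Field.Fract (b * y) t"
    using c_eq Y by (simp add: to_fract_def)
  ultimately have ct: "c * t = b * y"
    by (simp add: eq_fract)
  show "b dvd c"
  proof (cases "c = 0")
    case False
    then obtain c' s where c': "S_coprime c'" "s \<in> S" "c = c' * s"
      by (rule S_coprime_decomposition)
    have "b dvd c' * (s * t)"
      using ct c'(3) by (metis dvd_triv_left mult.assoc)
    moreover have "s * t \<in> S"
      using c'(2) t mult_in_S_iff by blast
    ultimately have "b dvd c'"
      using S_coprime_dvd_mult_S[OF b c'(1)] by blast
    then show ?thesis
      using c'(3) by simp
  qed simp
qed (rule to_fract_dvd_in_DS)

lemma to_fract_assoc_in_DS_iff: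
  "S_coprime a \<Longrightarrow> S_coprime b \<Longrightarrow> assoc_in DS (to_fract a) (to_fract b) \<longleftrightarrow> assoc_in UNIV a b"
  by (simp add: assoc_in_def to_fract_dvd_in_DS_iff)

lemma to_fract_eq_mult_unitE:
  assumes a: "S_coprime a" and b: "S_coprime b" and W: "unit_in DS W"
    and eq: "to_fract a = to_fract b * W"
  obtains k where "k dvd 1" "a = b * k"
proof -
  have "assoc_in DS (to_fract b) (to_fract a)"
    using eq assoc_in_mult_unit[OF mult_closed_DS to_fract_in_DS W] by simp
  then have "b dvd a" "a dvd b"
    using to_fract_assoc_in_DS_iff[OF b a] by simp_all
  then show ?thesis
    using dvd_antisym_unit_factor S_coprime_nonzero[OF b] that by blast
qed

lemma dvd_in_DS_to_fractE:
  assumes dvd: "dvd_in DS Y (to_fract a)" and a: "S_coprime a"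
  obtains b W where "S_coprime b" "b dvd a" "unit_in DS W" "Y = to_fract b * W"
proof -
  obtain C where Y: "Y \<in> DS" and C: "C \<in> DS" and eq: "to_fract a = Y * C"
    using dvd unfolding dvd_in_def by blast
  have "Y \<noteq> 0"
    using eq S_coprime_nonzero[OF a] by auto
  obtain b W where b: "S_coprime b" and W: "unit_in DS W" and Y_eq: "Y = to_fract b * W"
    using Y \<open>Y \<noteq> 0\<close> by (rule DS_nonzero_decomposition)
  have "to_fract a = to_fract b * (W * C)"
    using eq Y_eq by (simp add: mult.assoc)
  moreover have "W * C \<in> DS"
    using W C unit_in_mem mult_closedD[OF mult_closed_DS] by blast
  ultimately have "dvd_in DS (to_fract b) (to_fract a)"
    unfolding dvd_in_def using to_fract_in_DS by blast
  then have "b dvd a"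
    using to_fract_dvd_in_DS_iff[OF b] by blast
  then show ?thesis
    using that b W Y_eq by blast
qed

lemma atom_in_DS_to_fract_iff:
  assumes c: "S_coprime c"
  shows "atom_in DS (to_fract c) \<longleftrightarrow> atom_in UNIV c"
proof
  assume atom: "atom_in DS (to_fract c)"
  have "b dvd 1 \<or> d dvd 1" if cbd: "c = b * d" for b d
  proof -
    have "unit_in DS (to_fract b) \<or> unit_in DS (to_fract d)"
      using atom cbd to_fract_in_DS unfolding atom_in_def by simp
    moreover have "S_coprime b" "S_coprime d"
      using c cbd S_coprime_dvd by (metis dvd_triv_left dvd_triv_right)+
    ultimately show ?thesis
      using unit_in_DS_to_fract_S_coprime_iff by blast
  qed
  moreover have "c \<noteq> 0" "\<not> c dvd 1"
    using c atom unit_in_DS_to_fract_S_coprime_iff by (auto simp: S_coprime_def atom_in_def)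
  ultimately show "atom_in UNIV c"
    unfolding atom_in_UNIV_iff by blast
next
  assume atom: "atom_in UNIV c"
  have "unit_in DS B \<or> unit_in DS C" if BC: "B \<in> DS" "C \<in> DS" "to_fract c = B * C" for B C
  proof -
    have "B \<noteq> 0" "C \<noteq> 0"
      using BC S_coprime_nonzero[OF c] by auto
    then obtain b W d V where bd: "S_coprime b" "unit_in DS W" "B = to_fract b * W"
      "S_coprime d" "unit_in DS V" "C = to_fract d * V"
      using BC(1,2) by (metis DS_nonzero_decomposition)
    have "to_fract c = to_fract (b * d) * (W * V)"
      using BC(3) bd(3,6) by (simp add: mult_ac)
    then obtain k where k: "k dvd 1" "c = b * (d * k)"
      using to_fract_eq_mult_unitE[OF c S_coprime_mult[OF bd(1,4)] unit_in_mult[OF mult_closed_DS bd(2,5)]]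
      by (metis mult.assoc)
    then have "b dvd 1 \<or> d dvd 1"
      using atom unfolding atom_in_UNIV_iff by (metis dvd_mult_left)
    then have "unit_in DS (to_fract b) \<or> unit_in DS (to_fract d)"
      using unit_in_DS_to_fract_S_coprime_iff bd(1,4) by blast
    then show ?thesis
      using unit_in_mult[OF mult_closed_DS] bd by metis
  qed
  moreover have "to_fract c \<noteq> 0" "\<not> unit_in DS (to_fract c)"
    using S_coprime_nonzero[OF c] atom unit_in_DS_to_fract_S_coprime_iff[OF c]
    by (simp_all add: atom_in_UNIV_iff)
  ultimately show "atom_in DS (to_fract c)"
    unfolding atom_in_def using to_fract_in_DS by blast
qed

lemma atom_in_DSE:
  assumes A: "atom_in DS A"
  obtains c W where "S_coprime c" "atom_in UNIV c" "unit_in DS W" "A = to_fract c * W"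
proof -
  have "A \<in> DS" "A \<noteq> 0"
    using A by (auto simp: atom_in_def)
  then obtain c W where c: "S_coprime c" and W: "unit_in DS W" and A_eq: "A = to_fract c * W"
    by (rule DS_nonzero_decomposition)
  obtain W' where W': "unit_in DS W'" "W * W' = 1"
    using W by (rule unit_in_inverseE)
  have "to_fract c = A * W'"
    using A_eq W'(2) by (metis mult.assoc mult_1_right)
  then have "atom_in DS (to_fract c)"
    using atom_in_mult_unit[OF mult_closed_DS A W'(1)] by simp
  then show ?thesis
    using that c W A_eq atom_in_DS_to_fract_iff[OF c] by blast
qed

lemma atoms_in_DS_lift:
  assumes "\<forall>A\<in>set As. atom_in DS A"
  shows "\<exists>cs W. (\<forall>c\<in>set cs. S_coprime c \<and> atom_in UNIV c) \<and> unit_in DS W \<and>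
    prod_list As = to_fract (prod_list cs) * W \<and> list_all2 (\<lambda>A c. assoc_in DS A (to_fract c)) As cs"
  using assms
proof (induction As)
  case Nil
  show ?case
    using unit_in_one[OF mult_closed_DS] by (intro exI[of _ "[]"] exI[of _ 1]) simp
next
  case (Cons A As)
  obtain cs W where cs: "\<forall>c\<in>set cs. S_coprime c \<and> atom_in UNIV c" "unit_in DS W"
    "prod_list As = to_fract (prod_list cs) * W" "list_all2 (\<lambda>A c. assoc_in DS A (to_fract c)) As cs"
    using Cons by auto
  obtain c V where c: "S_coprime c" "atom_in UNIV c" "unit_in DS V" "A = to_fract c * V"
    using Cons.prems by (auto elim: atom_in_DSE)
  have "prod_list (A # As) = to_fract (prod_list (c # cs)) * (V * W)"
    using cs(3) c(4) by (simp add: mult_ac)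
  moreover have "assoc_in DS A (to_fract c)"
    using assoc_in_sym[OF assoc_in_mult_unit[OF mult_closed_DS to_fract_in_DS c(3)]] c(4) by simp
  ultimately show ?case
    using cs c unit_in_mult[OF mult_closed_DS c(3) cs(2)]
    by (intro exI[of _ "c # cs"] exI[of _ "V * W"]) auto
qed

definition class_to_DS :: "'a set \<Rightarrow> 'a fract set" where
  "class_to_DS C = {B. \<exists>c\<in>C. assoc_in DS (to_fract c) B}"

definition class_from_DS :: "'a fract set \<Rightarrow> 'a set" where
  "class_from_DS C = {b. S_coprime b \<and> to_fract b \<in> C}"

lemma class_to_DS_assoc_class: "class_to_DS (assoc_class UNIV c) = assoc_class DS (to_fract c)"
proof -
  have "assoc_in DS (to_fract c) (to_fract c')" if "assoc_in UNIV c c'" for c'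
    using that to_fract_dvd_in_DS by (simp add: assoc_in_def)
  then have "class_to_DS (assoc_class UNIV c) \<subseteq> assoc_class DS (to_fract c)"
    unfolding class_to_DS_def assoc_class_def using assoc_in_trans[OF mult_closed_DS] by blast
  moreover have "c \<in> assoc_class UNIV c"
    by (simp add: assoc_class_def)
  ultimately show ?thesis
    unfolding class_to_DS_def assoc_class_def by blast
qed

lemma class_from_DS_assoc_class:
  assumes c: "S_coprime c"
  shows "class_from_DS (assoc_class DS (to_fract c)) = assoc_class UNIV c"
proof -
  have "S_coprime b \<and> assoc_in DS (to_fract c) (to_fract b) \<longleftrightarrow> assoc_in UNIV c b" for b
    using c to_fract_assoc_in_DS_iff S_coprime_dvd by auto
  then show ?thesis
    unfolding class_from_DS_def assoc_class_def by blast
qed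

lemma factorization_type_DS_lift:
  "list_all2 (\<lambda>A c. assoc_in DS A (to_fract c)) As cs \<Longrightarrow>
    factorization_type DS As = image_mset class_to_DS (factorization_type UNIV cs)"
proof (induction rule: list_all2_induct)
  case (Cons A As c cs)
  then have "assoc_class DS A = assoc_class DS (to_fract c)"
    using assoc_class_eq_iff[OF mult_closed_DS] assoc_in_mem by blast
  then show ?case
    using Cons.IH class_to_DS_assoc_class by simp
qed simp

lemma factorization_S_coprime:
  assumes a: "S_coprime a" and cs: "cs \<in> factorizations_in UNIV a"
  shows "\<forall>c\<in>set cs. S_coprime c"
proof
  fix c assume "c \<in> set cs"
  then have "c dvd prod_list cs"
    by (rule prod_list_dvd)
  then show "S_coprime c"
    using cs S_coprime_dvd[OF a] unfolding factorizations_in_def by simp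
qed

lemma factorization_types_DS:
  assumes a: "S_coprime a"
  shows "factorization_types DS (to_fract a) = image_mset class_to_DS ` factorization_types UNIV a"
proof
  show "factorization_types DS (to_fract a) \<subseteq> image_mset class_to_DS ` factorization_types UNIV a"
  proof
    fix M assume "M \<in> factorization_types DS (to_fract a)"
    then obtain As where As: "As \<in> factorizations_in DS (to_fract a)" and M: "M = factorization_type DS As"
      unfolding factorization_types_def by blast
    then have "\<forall>A\<in>set As. atom_in DS A"
      by (simp add: factorizations_in_def)
    then obtain cs W where cs: "\<forall>c\<in>set cs. S_coprime c \<and> atom_in UNIV c" and W: "unit_in DS W"
      and prod_eq: "prod_list As = to_fract (prod_list cs) * W"
      and rel: "list_all2 (\<lambda>A c. assoc_in DS A (to_fract c)) As cs"
      using atoms_in_DS_lift by blast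
    have "to_fract a = to_fract (prod_list cs) * W"
      using As prod_eq by (simp add: factorizations_in_def)
    moreover have "S_coprime (prod_list cs)"
      using cs by (simp add: S_coprime_prod_list)
    ultimately obtain k where k: "k dvd 1" "a = prod_list cs * k"
      using to_fract_eq_mult_unitE[OF a _ W] by blast
    have "cs \<noteq> []"
      using As list_all2_lengthD[OF rel] by (auto simp: factorizations_in_def)
    then have "cs \<in> factorizations_in UNIV (prod_list cs)"
      using cs unfolding factorizations_in_def by blast
    moreover have "factorization_types UNIV a = factorization_types UNIV (prod_list cs)"
      using k factorization_types_mult_unit[OF mult_closed_UNIV, of k "prod_list cs"] by simp
    ultimately have "factorization_type UNIV cs \<in> factorization_types UNIV a"
      unfolding factorization_types_def by blast
    moreover have "M = image_mset class_to_DS (factorization_type UNIV cs)"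
      using M rel factorization_type_DS_lift by blast
    ultimately show "M \<in> image_mset class_to_DS ` factorization_types UNIV a"
      by blast
  qed
next
  show "image_mset class_to_DS ` factorization_types UNIV a \<subseteq> factorization_types DS (to_fract a)"
  proof
    fix M assume "M \<in> image_mset class_to_DS ` factorization_types UNIV a"
    then obtain cs where cs: "cs \<in> factorizations_in UNIV a"
      and M: "M = image_mset class_to_DS (factorization_type UNIV cs)"
      unfolding factorization_types_def by blast
    have "atom_in DS (to_fract c)" if "c \<in> set cs" for c
      using cs that factorization_S_coprime[OF a cs] atom_in_DS_to_fract_iff
      unfolding factorizations_in_def by blast
    then have "\<forall>A\<in>set (map to_fract cs). atom_in DS A"
      by simp
    then have fac: "map to_fract cs \<in> factorizations_in DS (to_fract a)"
      using cs to_fract_prod_list unfolding factorizations_in_def by auto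
    have "list_all2 (\<lambda>A c. assoc_in DS A (to_fract c)) (map to_fract cs) cs"
      unfolding list_all2_map1 by (rule list_all2_refl) (rule assoc_in_refl[OF mult_closed_DS to_fract_in_DS])
    then have "M = factorization_type DS (map to_fract cs)"
      using M factorization_type_DS_lift by simp
    then show "M \<in> factorization_types DS (to_fract a)"
      using fac unfolding factorization_types_def by blast
  qed
qed

lemma factorization_type_class_roundtrip:
  "\<forall>c\<in>set cs. S_coprime c \<Longrightarrow>
    image_mset class_from_DS (image_mset class_to_DS (factorization_type UNIV cs)) = factorization_type UNIV cs"
  by (induction cs) (simp_all add: class_to_DS_assoc_class class_from_DS_assoc_class)

lemma finite_factorization_types_DS_iff:
  assumes a: "S_coprime a"
  shows "finite (factorization_types DS (to_fract a)) \<longleftrightarrow> finite (factorization_types UNIV a)"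
proof
  assume fin: "finite (factorization_types DS (to_fract a))"
  have "factorization_types UNIV a \<subseteq> image_mset class_from_DS ` factorization_types DS (to_fract a)"
  proof
    fix M assume "M \<in> factorization_types UNIV a"
    then obtain cs where cs: "cs \<in> factorizations_in UNIV a" and M: "M = factorization_type UNIV cs"
      unfolding factorization_types_def by blast
    have "M = image_mset class_from_DS (image_mset class_to_DS M)"
      using M factorization_type_class_roundtrip factorization_S_coprime[OF a cs] by simp
    then show "M \<in> image_mset class_from_DS ` factorization_types DS (to_fract a)"
      using \<open>M \<in> factorization_types UNIV a\<close> factorization_types_DS[OF a] by blast
  qed
  then show "finite (factorization_types UNIV a)"
    using fin finite_surj by blast
qed (simp add: factorization_types_DS[OF a])

lemma atomic_in_DS_to_fract_iff:
  assumes a: "S_coprime a"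
  shows "atomic_in DS (to_fract a) \<longleftrightarrow> atomic_in UNIV a"
proof -
  have "atomic_in DS (to_fract a) \<longleftrightarrow> factorization_types DS (to_fract a) \<noteq> {}"
    by (rule atomic_in_iff_factorization_types[OF mult_closed_DS])
  also have "\<dots> \<longleftrightarrow> factorization_types UNIV a \<noteq> {}"
    by (simp add: factorization_types_DS[OF a])
  also have "\<dots> \<longleftrightarrow> atomic_in UNIV a"
    by (rule atomic_in_iff_factorization_types[OF mult_closed_UNIV, symmetric])
  finally show ?thesis .
qed

lemma atomic_in_DSE:
  assumes X: "atomic_in DS X"
  obtains a W where "S_coprime a" "atomic_in UNIV a" "unit_in DS W" "X = to_fract a * W"
proof -
  have "X \<in> DS" "X \<noteq> 0"
    using X by (auto simp: atomic_in_def)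
  then obtain a W where a: "S_coprime a" and W: "unit_in DS W" and X_eq: "X = to_fract a * W"
    by (rule DS_nonzero_decomposition)
  then have "atomic_in UNIV a"
    using X atomic_in_mult_unit[OF mult_closed_DS W] atomic_in_DS_to_fract_iff by simp
  then show ?thesis
    using that a W X_eq by blast
qed

lemma atom_divisor_classes_DS:
  assumes a: "S_coprime a"
  shows "atom_divisor_classes DS (to_fract a) = class_to_DS ` atom_divisor_classes UNIV a"
proof
  show "atom_divisor_classes DS (to_fract a) \<subseteq> class_to_DS ` atom_divisor_classes UNIV a"
  proof
    fix C assume "C \<in> atom_divisor_classes DS (to_fract a)"
    then obtain A where C: "C = assoc_class DS A" and A: "atom_in DS A" "dvd_in DS A (to_fract a)"
      unfolding atom_divisor_classes_def by blast
    obtain b W where b: "S_coprime b" "b dvd a" and W: "unit_in DS W" and A_eq: "A = to_fract b * W"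
      using A(2) a by (rule dvd_in_DS_to_fractE)
    have "atom_in UNIV b"
      using A(1) atom_in_mult_unit_iff[OF mult_closed_DS W] atom_in_DS_to_fract_iff[OF b(1)]
      unfolding A_eq by blast
    then have "assoc_class UNIV b \<in> atom_divisor_classes UNIV a"
      using b(2) unfolding atom_divisor_classes_def in_UNIV_simps by blast
    moreover have "C = class_to_DS (assoc_class UNIV b)"
      using C A_eq assoc_class_mult_unit[OF mult_closed_DS to_fract_in_DS W] class_to_DS_assoc_class
      by simp
    ultimately show "C \<in> class_to_DS ` atom_divisor_classes UNIV a"
      by blast
  qed
next
  show "class_to_DS ` atom_divisor_classes UNIV a \<subseteq> atom_divisor_classes DS (to_fract a)"
  proof
    fix C assume "C \<in> class_to_DS ` atom_divisor_classes UNIV a"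
    then obtain b where C: "C = class_to_DS (assoc_class UNIV b)" and b: "atom_in UNIV b" "b dvd a"
      unfolding atom_divisor_classes_def in_UNIV_simps by blast
    have "S_coprime b"
      using a b(2) S_coprime_dvd by blast
    then have "atom_in DS (to_fract b)"
      using b(1) atom_in_DS_to_fract_iff by blast
    moreover have "dvd_in DS (to_fract b) (to_fract a)"
      using b(2) by (rule to_fract_dvd_in_DS)
    moreover have "C = assoc_class DS (to_fract b)"
      using C class_to_DS_assoc_class by simp
    ultimately show "C \<in> atom_divisor_classes DS (to_fract a)"
      unfolding atom_divisor_classes_def by blast
  qed
qed

lemma finite_atom_divisor_classes_DS_iff:
  assumes a: "S_coprime a"
  shows "finite (atom_divisor_classes DS (to_fract a)) \<longleftrightarrow> finite (atom_divisor_classes UNIV a)"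
proof
  assume fin: "finite (atom_divisor_classes DS (to_fract a))"
  have "atom_divisor_classes UNIV a \<subseteq> class_from_DS ` atom_divisor_classes DS (to_fract a)"
  proof
    fix C assume C_in: "C \<in> atom_divisor_classes UNIV a"
    then obtain b where C: "C = assoc_class UNIV b" and "b dvd a"
      unfolding atom_divisor_classes_def in_UNIV_simps by blast
    then have "C = class_from_DS (class_to_DS C)"
      using a S_coprime_dvd class_to_DS_assoc_class class_from_DS_assoc_class by metis
    then show "C \<in> class_from_DS ` atom_divisor_classes DS (to_fract a)"
      using C_in atom_divisor_classes_DS[OF a] by blast
  qed
  then show "finite (atom_divisor_classes UNIV a)"
    using fin finite_surj by blast
qed (simp add: atom_divisor_classes_DS[OF a])

subsection \<open>Transfer of the three properties\<close>

lemma atom_divisor_classes_S_coprime_mult: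
  assumes a: "S_coprime a" and u: "u dvd 1" and qs: "set qs \<subseteq> P"
  shows "atom_divisor_classes UNIV (a * (u * prod_list qs))
    \<subseteq> assoc_class UNIV ` set qs \<union> atom_divisor_classes UNIV a"
proof
  have s: "u * prod_list qs \<in> S"
    using u qs S_generated by blast
  fix C assume "C \<in> atom_divisor_classes UNIV (a * (u * prod_list qs))"
  then obtain c where C: "C = assoc_class UNIV c" and c: "atom_in UNIV c"
    and dvd: "c dvd a * (u * prod_list qs)"
    unfolding atom_divisor_classes_def in_UNIV_simps by blast
  show "C \<in> assoc_class UNIV ` set qs \<union> atom_divisor_classes UNIV a"
  proof (cases "S_coprime c")
    case True
    then have "c dvd a"
      using S_coprime_dvd_mult_S[OF _ a s] dvd by blast
    then show ?thesis
      using C c unfolding atom_divisor_classes_def in_UNIV_simps by blast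
  next
    case False
    then have c_prime: "prime_element c"
      using c atom_S_coprime_or_in_S atom_in_S_imp_prime by blast
    have "\<not> c dvd a"
      using False a S_coprime_dvd by blast
    then have "c dvd u * prod_list qs"
      using prime_elementD(3)[OF c_prime dvd] by blast
    then obtain q where "q \<in> set qs" "assoc_class UNIV c = assoc_class UNIV q"
      using prime_element_dvd_unit_prod_list[OF c_prime _ _ u] qs prime_generators by blast
    then show ?thesis
      using C by blast
  qed
qed

lemma factorization_types_S_coprime_mult:
  assumes a: "S_coprime a" and u: "u dvd 1" and qs: "set qs \<subseteq> P"
  shows "factorization_types UNIV (a * (u * prod_list qs))
    \<subseteq> (\<lambda>M. M + factorization_type UNIV qs) ` insert {#} (factorization_types UNIV a)"
proof
  have s: "u * prod_list qs \<in> S"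
    using u qs S_generated by blast
  fix M assume "M \<in> factorization_types UNIV (a * (u * prod_list qs))"
  then obtain cs where cs: "cs \<noteq> []" "\<forall>c\<in>set cs. atom_in UNIV c" "prod_list cs = a * (u * prod_list qs)"
    and M: "M = factorization_type UNIV cs"
    unfolding factorization_types_def factorizations_in_def by auto
  let ?ns = "filter S_coprime cs" and ?ms = "filter (\<lambda>c. \<not> S_coprime c) cs"
  obtain w where w: "w dvd 1" "a = prod_list ?ns * w" "prod_list ?ms = u * prod_list qs * w"
    using atom_factorization_split[OF cs(2,3) a s] by blast
  have "\<forall>c\<in>set ?ms. prime_element c"
    using cs(2) atom_S_coprime_or_in_S atom_in_S_imp_prime by auto
  moreover have "\<forall>q\<in>set qs. prime_element q"
    using qs prime_generators by blast
  moreover have "prod_list qs * (u * w) = prod_list ?ms"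
    using w(3) by (simp add: mult_ac)
  moreover have "u * w dvd 1"
    using mult_dvd_mono[OF u w(1)] by simp
  ultimately have ms_type: "factorization_type UNIV ?ms = factorization_type UNIV qs"
    using factorization_type_primes_unique by metis
  have "factorization_type UNIV ?ns \<in> insert {#} (factorization_types UNIV a)"
  proof (cases "?ns = []")
    case False
    then have "?ns \<in> factorizations_in UNIV (prod_list ?ns)"
      using cs(2) unfolding factorizations_in_def by auto
    then show ?thesis
      using w(1,2) factorization_types_mult_unit[OF mult_closed_UNIV, of w "prod_list ?ns"]
      unfolding factorization_types_def by auto
  qed simp
  then show "M \<in> (\<lambda>M. M + factorization_type UNIV qs) ` insert {#} (factorization_types UNIV a)"
    using M ms_type factorization_type_filter_split[of UNIV cs S_coprime] by auto
qed

lemma completely_atomic_DS_if_completely_atomic: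
  assumes CA: "completely_atomic (UNIV :: 'a set)"
  shows "completely_atomic DS"
  unfolding completely_atomic_def
proof (intro allI impI, elim conjE)
  fix X Y assume X: "atomic_in DS X" and YX: "dvd_in DS Y X" and Y: "\<not> unit_in DS Y"
  obtain a W where a: "S_coprime a" "atomic_in UNIV a" and W: "unit_in DS W" and X_eq: "X = to_fract a * W"
    using X by (rule atomic_in_DSE)
  have "dvd_in DS Y (to_fract a)"
    using YX X_eq dvd_in_mult_unit_iff[OF mult_closed_DS W] by simp
  then obtain b V where b: "S_coprime b" "b dvd a" and V: "unit_in DS V" and Y_eq: "Y = to_fract b * V"
    using a(1) by (rule dvd_in_DS_to_fractE)
  have "\<not> b dvd 1"
    using Y Y_eq V unit_in_mult[OF mult_closed_DS] unit_in_DS_to_fract_S_coprime_iff[OF b(1)] by auto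
  then have "atomic_in UNIV b"
    using CA a(2) b(2) unfolding completely_atomic_def by simp
  then show "atomic_in DS Y"
    using Y_eq atomic_in_mult_unit[OF mult_closed_DS V] atomic_in_DS_to_fract_iff[OF b(1)] by simp
qed

lemma completely_atomic_if_completely_atomic_DS:
  assumes CA: "completely_atomic DS"
  shows "completely_atomic (UNIV :: 'a set)"
  unfolding completely_atomic_def
proof (intro allI impI, elim conjE)
  fix x y :: 'a assume x: "atomic_in UNIV x" and "dvd_in UNIV y x" and "\<not> unit_in UNIV y"
  then have yx: "y dvd x" and y: "\<not> y dvd 1"
    by simp_all
  have "x \<noteq> 0"
    using x by (simp add: atomic_in_def)
  then obtain a s where a: "S_coprime a" and s: "s \<in> S" and x_eq: "x = a * s"
    by (rule S_coprime_decomposition)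
  have "y \<noteq> 0"
    using yx \<open>x \<noteq> 0\<close> by auto
  then obtain b t where b: "S_coprime b" and t: "t \<in> S" and y_eq: "y = b * t"
    by (rule S_coprime_decomposition)
  have "b dvd a"
    using S_coprime_dvd_mult_S[OF b a s] yx x_eq y_eq by (metis dvd_mult_left)
  have "b dvd 1 \<or> atomic_in UNIV b"
  proof (cases "b dvd 1")
    case False
    then have "atomic_in UNIV a"
      using atomic_S_coprime_factor[OF _ a s] x x_eq \<open>b dvd a\<close> dvd_trans by blast
    then have "atomic_in DS (to_fract a)"
      using atomic_in_DS_to_fract_iff[OF a] by simp
    moreover have "dvd_in DS (to_fract b) (to_fract a)"
      using \<open>b dvd a\<close> by (rule to_fract_dvd_in_DS)
    moreover have "\<not> unit_in DS (to_fract b)"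
      using False unit_in_DS_to_fract_S_coprime_iff[OF b] by simp
    ultimately have "atomic_in DS (to_fract b)"
      using CA unfolding completely_atomic_def by blast
    then show ?thesis
      using atomic_in_DS_to_fract_iff[OF b] by simp
  qed simp
  moreover have "t dvd 1 \<or> atomic_in UNIV t"
    using S_nonunit_atomic[OF t] by blast
  ultimately show "atomic_in UNIV y"
    using atomic_in_mult_unit_or_atomic[OF mult_closed_UNIV, of b t] y y_eq by simp
qed

lemma RIDF_DS_if_RIDF:
  assumes RIDF: "RIDF (UNIV :: 'a set)"
  shows "RIDF DS"
  unfolding RIDF_iff_finite_atom_divisor_classes
proof (intro allI impI)
  fix X assume "atomic_in DS X"
  then obtain a W where a: "S_coprime a" "atomic_in UNIV a" and W: "unit_in DS W" and X_eq: "X = to_fract a * W"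
    by (rule atomic_in_DSE)
  have "finite (atom_divisor_classes UNIV a)"
    using RIDF a(2) unfolding RIDF_iff_finite_atom_divisor_classes by blast
  then show "finite (atom_divisor_classes DS X)"
    using X_eq atom_divisor_classes_mult_unit[OF mult_closed_DS W] finite_atom_divisor_classes_DS_iff[OF a(1)]
    by simp
qed

lemma RIDF_if_RIDF_DS:
  assumes RIDF: "RIDF DS"
  shows "RIDF (UNIV :: 'a set)"
  unfolding RIDF_iff_finite_atom_divisor_classes
proof (intro allI impI)
  fix x :: 'a assume x: "atomic_in UNIV x"
  have "x \<noteq> 0"
    using x by (simp add: atomic_in_def)
  then obtain a s where a: "S_coprime a" and s: "s \<in> S" and x_eq: "x = a * s"
    by (rule S_coprime_decomposition)
  obtain u qs where u: "u dvd 1" and qs: "set qs \<subseteq> P" and s_eq: "s = u * prod_list qs"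
    using s by (rule in_S_E)
  have "finite (atom_divisor_classes UNIV a)"
  proof (cases "a dvd 1")
    case True
    then have "atom_divisor_classes UNIV a = {}"
      unfolding atom_divisor_classes_def atom_in_UNIV_iff in_UNIV_simps by (auto dest: dvd_trans)
    then show ?thesis
      by simp
  next
    case False
    then have "atomic_in DS (to_fract a)"
      using atomic_S_coprime_factor[OF _ a s] x x_eq atomic_in_DS_to_fract_iff[OF a] by simp
    then show ?thesis
      using RIDF finite_atom_divisor_classes_DS_iff[OF a] unfolding RIDF_iff_finite_atom_divisor_classes by blast
  qed
  then show "finite (atom_divisor_classes UNIV x)"
    using atom_divisor_classes_S_coprime_mult[OF a u qs] x_eq s_eq finite_subset by fastforce
qed

lemma UFFD_DS_if_UFFD:
  assumes UFFD: "UFFD (UNIV :: 'a set)"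
  shows "UFFD DS"
  unfolding UFFD_iff_finite_factorization_types[OF mult_closed_DS]
proof (intro allI impI)
  fix X assume "atomic_in DS X"
  then obtain a W where a: "S_coprime a" "atomic_in UNIV a" and W: "unit_in DS W" and X_eq: "X = to_fract a * W"
    by (rule atomic_in_DSE)
  have "finite (factorization_types UNIV a)"
    using UFFD a(2) unfolding UFFD_iff_finite_factorization_types[OF mult_closed_UNIV] by blast
  then show "finite (factorization_types DS X)"
    using X_eq factorization_types_mult_unit[OF mult_closed_DS W] finite_factorization_types_DS_iff[OF a(1)]
    by simp
qed

lemma UFFD_if_UFFD_DS:
  assumes UFFD: "UFFD DS"
  shows "UFFD (UNIV :: 'a set)"
  unfolding UFFD_iff_finite_factorization_types[OF mult_closed_UNIV]
proof (intro allI impI)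
  fix x :: 'a assume x: "atomic_in UNIV x"
  have "x \<noteq> 0"
    using x by (simp add: atomic_in_def)
  then obtain a s where a: "S_coprime a" and s: "s \<in> S" and x_eq: "x = a * s"
    by (rule S_coprime_decomposition)
  obtain u qs where u: "u dvd 1" and qs: "set qs \<subseteq> P" and s_eq: "s = u * prod_list qs"
    using s by (rule in_S_E)
  have "finite (factorization_types UNIV a)"
  proof (cases "atomic_in UNIV a")
    case True
    then show ?thesis
      using UFFD finite_factorization_types_DS_iff[OF a] atomic_in_DS_to_fract_iff[OF a]
      unfolding UFFD_iff_finite_factorization_types[OF mult_closed_DS] by blast
  next
    case False
    then have "factorization_types UNIV a = {}"
      using atomic_in_iff_factorization_types[OF mult_closed_UNIV, of a] by blast
    then show ?thesis
      by simp
  qed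
  then show "finite (factorization_types UNIV x)"
    using factorization_types_S_coprime_mult[OF a u qs] x_eq s_eq finite_subset by fastforce
qed

end

theorem proposition3p3:
  fixes S :: "'a::idom set"
  assumes "splitting_set S" and "generated_by_primes S"
  shows "(completely_atomic (UNIV :: 'a set) \<longleftrightarrow> completely_atomic (localization S))
       \<and> (RIDF (UNIV :: 'a set) \<longleftrightarrow> RIDF (localization S))
       \<and> (UFFD (UNIV :: 'a set) \<longleftrightarrow> UFFD (localization S))"
proof -
  obtain P where "\<forall>p\<in>P. prime_element p" "S = {u * prod_list ps | u ps. u dvd 1 \<and> set ps \<subseteq> P}"
    using assms(2) unfolding generated_by_primes_def by blast
  then interpret prime_splitting_set S P
    using assms(1) by unfold_locales auto
  show ?thesis
    using completely_atomic_DS_if_completely_atomic completely_atomic_if_completely_atomic_DS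
      RIDF_DS_if_RIDF RIDF_if_RIDF_DS UFFD_DS_if_UFFD UFFD_if_UFFD_DS by blast
qed

end
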